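(* Let $q\ge2$ and $0<\delta\le\frac{q-1}{q}$. Then $$\lim_{n\to\infty}\frac{\log_q A_q(n,2\delta n)}{n}\ge 1-(1+\delta)H_q\!\left(\frac{\delta}{1+\delta}\right)+\delta\log_q(q-1)-H_q(\delta).$$
   Context: $\Sigma_q$ is an alphabet of size $q$. The insdel distance $d(\mathbf a,\mathbf b)$ is the minimum number of single-symbol insertions and deletions needed to transform $\mathbf a$ into $\mathbf b$. The minimum insdel distance of $\mathcal{C}\subseteq\Sigma_q^n$ is the minimum of $d(\mathbf a,\mathbf b)$ over distinct $\mathbf a,\mathbf b\in\mathcal{C}$. $A_q(n,d)$ is the maximum cardinality of a code $\mathcal{C}\subseteq\Sigma_q^n$ with minimum insdel distance at least $d$. $H_q(x)=x\log_q(q-1)-x\log_qx-(1-x)\log_q(1-x)$ for $0<x<1$, $H_q(0)=H_q(1)=0$. *)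

theory Defs
  imports Complex_Main "HOL-Library.Liminf_Limsup" "HOL-Library.Extended_Real"
begin

definition words :: "nat \<Rightarrow> nat \<Rightarrow> nat list set" where
  "words q n = {w. length w = n \<and> set w \<subseteq> {0..<q}}"

definition insdel_step :: "nat \<Rightarrow> nat list \<Rightarrow> nat list \<Rightarrow> bool" where
  "insdel_step q xs ys \<longleftrightarrow> (\<exists>u v c. c < q \<and>
      ((xs = u @ v \<and> ys = u @ c # v) \<or> (xs = u @ c # v \<and> ys = u @ v)))"

definition insdel_dist :: "nat \<Rightarrow> nat list \<Rightarrow> nat list \<Rightarrow> nat" where
  "insdel_dist q a b = (LEAST k. (insdel_step q ^^ k) a b)"

definition min_dist_ge :: "nat \<Rightarrow> nat list set \<Rightarrow> real \<Rightarrow> bool" where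
  "min_dist_ge q C d \<longleftrightarrow> (\<forall>a\<in>C. \<forall>b\<in>C. a \<noteq> b \<longrightarrow> real (insdel_dist q a b) \<ge> d)"

definition A_q :: "nat \<Rightarrow> nat \<Rightarrow> real \<Rightarrow> nat" where
  "A_q q n d = Sup {card C | C. C \<subseteq> words q n \<and> min_dist_ge q C d}"

definition H_q :: "nat \<Rightarrow> real \<Rightarrow> real" where
  "H_q q x = (if 0 < x \<and> x < 1 then
      x * log q (real q - 1) - x * log q x - (1 - x) * log q (1 - x) else 0)"

end

theory Submission
  imports Defs "HOL-Library.Sublist"
begin

(*
  A Gilbert-Varshamov argument. A code of maximum size with minimum insdel distance 2 delta n
  cannot be enlarged, so every word of length n lies at distance less than 2 delta n from some
  codeword. A path of k insertions and deletions between two words of length n leaves a common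
  subsequence of length at least n - k/2, so the word and the codeword share a subsequence of
  length n - t, where t = ceil(delta n) - 1. A codeword has at most C(n,t) subsequences of
  length n - t, and a word of length n - t has at most C(n+t,t) (q-1)^t supersequences of
  length n; hence q^n <= A_q(n, 2 delta n) C(n,t) C(n+t,t) (q-1)^t. The entropy bound
  C(N,k) <= p^-k (1-p)^-(N-k), with p = delta and p = delta/(1+delta), turns this into the rate.
*)

section \<open>Insdel distance and common subsequences\<close>

lemma insdel_step_sym: "insdel_step q a b \<longleftrightarrow> insdel_step q b a"
  unfolding insdel_step_def by blast

lemma relpowp_sym:
  assumes "\<And>x y. R x y \<Longrightarrow> R y x" and "(R ^^ k) a b"
  shows "(R ^^ k) b a"
  using assms(2)
proof (induction k arbitrary: b)
  case (Suc k)
  then obtain c where "(R ^^ k) a c" "R c b" by auto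
  then show ?case using Suc.IH assms(1) by (metis relpowp_Suc_I2)
qed simp

lemma insdel_dist_sym: "insdel_dist q a b = insdel_dist q b a"
  unfolding insdel_dist_def
  by (metis (no_types, lifting) insdel_step_sym relpowp_sym)

lemma insdel_dist_self: "insdel_dist q a a = 0"
  unfolding insdel_dist_def by (simp add: Least_eq_0)

lemma subseq_delete:
  assumes "subseq z (u @ c # v)"
  obtains z' where "subseq z' z" "subseq z' (u @ v)" "length z \<le> length z' + 1"
proof -
  from assms obtain z1 z2 where z: "z = z1 @ z2" "subseq z1 u" "subseq z2 (c # v)"
    by (rule subseq_appendE)
  have "subseq (tl z2) v"
    using z(3) by (cases z2) (auto dest: subseq_Cons' split: if_splits)
  then show thesis
    using z by (intro that[of "z1 @ tl z2"]) (auto intro: list_emb_append_mono)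
qed

lemma subseq_set_subset: "subseq xs ys \<Longrightarrow> set xs \<subseteq> set ys"
  by (auto simp: subseq_conv_nths dest: in_set_nthsD)

lemma insdel_path_common_subseq:
  "(insdel_step q ^^ k) a b \<Longrightarrow>
    \<exists>z. subseq z a \<and> subseq z b \<and> length a + length b \<le> 2 * length z + k"
proof (induction k arbitrary: b)
  case (Suc k)
  then obtain b' where path: "(insdel_step q ^^ k) a b'" and step: "insdel_step q b' b" by auto
  from Suc.IH[OF path] obtain z where
    z: "subseq z a" "subseq z b'" "length a + length b' \<le> 2 * length z + k" by blast
  from step obtain u v c where "(b' = u @ v \<and> b = u @ c # v) \<or> (b' = u @ c # v \<and> b = u @ v)"
    unfolding insdel_step_def by blast
  then show ?case
  proof
    assume uv: "b' = u @ v \<and> b = u @ c # v"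
    then have "subseq b' b" by (simp add: subseq_append' list_emb_Cons)
    with z uv show ?thesis by (auto intro: subseq_order.order_trans)
  next
    assume uv: "b' = u @ c # v \<and> b = u @ v"
    with z(2) obtain z' where "subseq z' z" "subseq z' b" "length z \<le> length z' + 1"
      by (auto elim: subseq_delete)
    with z uv show ?thesis by (intro exI[of _ z']) (auto intro: subseq_order.order_trans)
  qed
qed (auto intro!: exI[of _ a])

lemma insdel_path_to_Nil: "set a \<subseteq> {0..<q} \<Longrightarrow> (insdel_step q ^^ length a) a []"
proof (induction a)
  case (Cons x a)
  have "insdel_step q (x # a) a"
    unfolding insdel_step_def using Cons.prems by (intro exI[of _ "[]"] exI[of _ a] exI[of _ x]) auto
  then have "(insdel_step q ^^ Suc (length a)) (x # a) []"
    using Cons by (intro relpowp_Suc_I2) auto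
  then show ?case by (simp only: length_Cons)
qed simp

lemma insdel_dist_path:
  assumes "set a \<subseteq> {0..<q}" "set b \<subseteq> {0..<q}"
  shows "(insdel_step q ^^ insdel_dist q a b) a b"
  unfolding insdel_dist_def
proof (rule LeastI)
  show "(insdel_step q ^^ (length a + length b)) a b"
    using insdel_path_to_Nil[OF assms(1)] relpowp_sym[OF _ insdel_path_to_Nil[OF assms(2)]]
    by (auto simp: insdel_step_sym intro: relpowp_trans)
qed

lemma insdel_dist_common_subseq:
  assumes "set a \<subseteq> {0..<q}" "set b \<subseteq> {0..<q}"
  obtains z where "subseq z a" "subseq z b"
    "length a + length b \<le> 2 * length z + insdel_dist q a b"
  using insdel_path_common_subseq[OF insdel_dist_path[OF assms]] by blast

section \<open>Counting subsequences and supersequences\<close>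

lemma finite_words: "finite (words q n)"
  using finite_lists_length_eq[of "{0..<q}" n] unfolding words_def by (simp add: conj_commute)

lemma card_words: "card (words q n) = q ^ n"
  using card_lists_length_eq[of "{0..<q}" n] unfolding words_def by (simp add: conj_commute)

lemma words_Suc: "words q (Suc n) = (\<Union>c\<in>{0..<q}. Cons c ` words q n)"
  by (auto simp: words_def length_Suc_conv)

lemma nths_inter_indices: "nths xs (I \<inter> {0..<length xs}) = nths xs I"
  unfolding nths_def by (rule arg_cong[where f="map fst"], rule filter_cong) (auto simp: set_zip)

lemma card_subseqs_length_le: "card {z. length z = m \<and> subseq z c} \<le> length c choose m"
proof -
  let ?I = "{I. I \<subseteq> {0..<length c} \<and> card I = m}"
  have "{z. length z = m \<and> subseq z c} \<subseteq> nths c ` ?I"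
  proof
    fix z assume "z \<in> {z. length z = m \<and> subseq z c}"
    then have "length z = m" "subseq z c" by auto
    then obtain N where "z = nths c N" by (auto simp: subseq_conv_nths)
    then have "z = nths c (N \<inter> {0..<length c})" by (simp add: nths_inter_indices)
    moreover have "length z = card (N \<inter> {0..<length c})"
      unfolding \<open>z = nths c N\<close> length_nths by (rule arg_cong[where f=card]) auto
    ultimately show "z \<in> nths c ` ?I" using \<open>length z = m\<close>
      by (intro image_eqI[of _ _ "N \<inter> {0..<length c}"]) auto
  qed
  then have "card {z. length z = m \<and> subseq z c} \<le> card (nths c ` ?I)"
    by (intro card_mono) auto
  also have "\<dots> \<le> card ?I" by (intro card_image_le) auto
  also have "\<dots> = length c choose m" by (simp add: n_subsets)
  finally show ?thesis .
qed

lemma two_power_le_central_binomial: "2 ^ n \<le> (2 * n) choose n"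
proof -
  have "2 ^ n = (\<Sum>k\<le>n. n choose k)" by (simp add: choose_row_sum)
  also have "\<dots> \<le> (\<Sum>k\<le>n. (n choose k)\<^sup>2)"
    by (intro sum_mono) (metis le_square power2_eq_square)
  also have "\<dots> = (2 * n) choose n" by (rule choose_square_sum)
  finally show ?thesis .
qed

definition supseqs :: "nat \<Rightarrow> nat \<Rightarrow> nat list \<Rightarrow> nat list set" where
  "supseqs q n z = {y \<in> words q n. subseq z y}"

lemma finite_supseqs: "finite (supseqs q n z)"
  unfolding supseqs_def using finite_words by simp

lemma card_supseqs_Cons_le:
  assumes "a < q"
  shows "card (supseqs q (Suc n) (a # z))
    \<le> card (supseqs q n z) + (q - 1) * card (supseqs q n (a # z))"
proof -
  have "supseqs q (Suc n) (a # z)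
      \<subseteq> Cons a ` supseqs q n z \<union> (\<Union>c\<in>{0..<q} - {a}. Cons c ` supseqs q n (a # z))"
    by (auto simp: supseqs_def words_Suc split: if_splits)
  then have "card (supseqs q (Suc n) (a # z))
      \<le> card (Cons a ` supseqs q n z \<union> (\<Union>c\<in>{0..<q} - {a}. Cons c ` supseqs q n (a # z)))"
    by (intro card_mono) (auto simp: finite_supseqs)
  also have "\<dots> \<le> card (supseqs q n z) + (\<Sum>c\<in>{0..<q} - {a}. card (supseqs q n (a # z)))"
    by (intro order.trans[OF card_Un_le] add_mono card_image_le finite_supseqs
        order.trans[OF card_UN_le]) (auto simp: card_image)
  also have "\<dots> = card (supseqs q n z) + (q - 1) * card (supseqs q n (a # z))"
    using assms by simp
  finally show ?thesis .
qed

lemma card_supseqs_Nil_le: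
  assumes "q \<ge> 2"
  shows "card (supseqs q n []) \<le> ((2 * n) choose n) * (q - 1) ^ n"
proof -
  have "card (supseqs q n []) = q ^ n" by (simp add: supseqs_def card_words)
  also have "\<dots> \<le> (2 * (q - 1)) ^ n" using assms by (intro power_mono) auto
  also have "\<dots> \<le> ((2 * n) choose n) * (q - 1) ^ n"
    by (simp add: power_mult_distrib two_power_le_central_binomial)
  finally show ?thesis .
qed

lemma card_supseqs_le:
  assumes "q \<ge> 2" and "set z \<subseteq> {0..<q}" and "length z + t = n"
  shows "card (supseqs q n z) \<le> ((n + t) choose t) * (q - 1) ^ t"
  using assms(2,3)
proof (induction n arbitrary: z t)
  case 0
  with card_supseqs_Nil_le[OF assms(1), of 0] show ?case by simp
next
  case (Suc n)
  show ?case
  proof (cases z)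
    case Nil
    with Suc.prems card_supseqs_Nil_le[OF assms(1), of "Suc n"] show ?thesis by (simp add: mult_2)
  next
    case (Cons a z')
    with Suc.prems have "a < q" and z': "set z' \<subseteq> {0..<q}" "length z' + t = n" by auto
    note recurrence = card_supseqs_Cons_le[OF \<open>a < q\<close>, of n z', folded Cons]
    have IH': "card (supseqs q n z') \<le> ((n + t) choose t) * (q - 1) ^ t"
      using Suc.IH[OF z'] .
    show ?thesis
    proof (cases t)
      case 0
      with Cons Suc.prems have "supseqs q n z = {}"
        by (auto simp: supseqs_def words_def dest: list_emb_length)
      with recurrence IH' 0 show ?thesis by simp
    next
      case (Suc s)
      have "(q - 1) * card (supseqs q n z) \<le> ((n + s) choose s) * (q - 1) ^ t"
        using Suc.IH[OF Suc.prems(1), of s] Suc.prems(2) Suc by (simp add: mult_left_mono)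
      with recurrence IH' have "card (supseqs q (Suc n) z)
          \<le> (((n + t) choose t) + ((n + s) choose s)) * (q - 1) ^ t"
        unfolding add_mult_distrib by linarith
      also have "\<dots> \<le> ((Suc n + t) choose t) * (q - 1) ^ t"
        using binomial_right_mono[of "n + s" "Suc (n + s)" s] Suc by (intro mult_right_mono) auto
      finally show ?thesis .
    qed
  qed
qed

section \<open>A Gilbert-Varshamov bound for the insdel distance\<close>

lemma finite_codes: "finite {C. C \<subseteq> words q n \<and> min_dist_ge q C d}"
  by (rule finite_subset[of _ "Pow (words q n)"]) (auto simp: finite_words)

lemma A_q_eq_Max: "A_q q n d = Max (card ` {C. C \<subseteq> words q n \<and> min_dist_ge q C d})"
proof -
  let ?codes = "{C. C \<subseteq> words q n \<and> min_dist_ge q C d}"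
  have "{} \<in> ?codes" by (simp add: min_dist_ge_def)
  then have "card ` ?codes \<noteq> {}" by blast
  moreover have "{card C | C. C \<subseteq> words q n \<and> min_dist_ge q C d} = card ` ?codes"
    by blast
  ultimately show ?thesis
    unfolding A_q_def by (simp add: cSup_eq_Max finite_codes)
qed

lemma card_le_A_q:
  assumes "C \<subseteq> words q n" "min_dist_ge q C d"
  shows "card C \<le> A_q q n d"
  unfolding A_q_eq_Max using assms by (intro Max_ge) (simp_all add: finite_codes)

lemma A_q_attained:
  obtains C where "C \<subseteq> words q n" "min_dist_ge q C d" "card C = A_q q n d"
proof -
  let ?codes = "{C. C \<subseteq> words q n \<and> min_dist_ge q C d}"
  have "{} \<in> ?codes" by (simp add: min_dist_ge_def)
  then have "A_q q n d \<in> card ` ?codes"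
    unfolding A_q_eq_Max by (intro Max_in finite_imageI finite_codes) blast
  then obtain C where "C \<in> ?codes" "A_q q n d = card C" by (rule imageE)
  with that show thesis by auto
qed

lemma maximum_code_covers:
  assumes C: "C \<subseteq> words q n" "min_dist_ge q C d" "card C = A_q q n d"
    and "0 < d" and w: "w \<in> words q n"
  shows "\<exists>c\<in>C. real (insdel_dist q c w) < d"
proof (rule ccontr)
  assume "\<not> ?thesis"
  then have far: "d \<le> real (insdel_dist q c w)" if "c \<in> C" for c
    using that by (simp add: not_less)
  have "w \<notin> C" using far[of w] \<open>0 < d\<close> by (auto simp: insdel_dist_self)
  have "min_dist_ge q (insert w C) d"
    unfolding min_dist_ge_def
  proof (intro ballI impI)
    fix a b assume "a \<in> insert w C" "b \<in> insert w C" "a \<noteq> b"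
    then consider "a \<in> C" "b \<in> C" | "a = w" "b \<in> C" | "a \<in> C" "b = w" by auto
    then show "d \<le> real (insdel_dist q a b)"
    proof cases
      case 1
      with C(2) \<open>a \<noteq> b\<close> show ?thesis by (simp add: min_dist_ge_def)
    next
      case 2
      with far show ?thesis by (simp add: insdel_dist_sym[of q w])
    next
      case 3
      with far show ?thesis by simp
    qed
  qed
  with C w have "card (insert w C) \<le> card C" by (auto intro: card_le_A_q)
  moreover have "finite C" using C(1) finite_words by (rule finite_subset)
  ultimately show False using \<open>w \<notin> C\<close> by simp
qed

lemma close_words_common_subseq:
  assumes "a \<in> words q n" "b \<in> words q n" "real (insdel_dist q a b) < 2 * (real t + 1)"
  obtains z where "length z = n - t" "subseq z a" "subseq z b"
proof -
  obtain z where z: "subseq z a" "subseq z b"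
    and len: "length a + length b \<le> 2 * length z + insdel_dist q a b"
    using assms(1,2) unfolding words_def by (auto elim: insdel_dist_common_subseq)
  have "real (insdel_dist q a b) < real (2 * (t + 1))"
    using assms(3) by simp
  then have "insdel_dist q a b < 2 * (t + 1)" by (rule of_nat_less_imp_less)
  moreover have "length a = n" "length b = n" using assms(1,2) by (auto simp: words_def)
  ultimately have "n - t \<le> length z" using len by arith
  then have "subseq (take (n - t) z) z" "length (take (n - t) z) = n - t"
    by (auto intro: prefix_imp_subseq take_is_prefix)
  with z show thesis by (metis that subseq_order.order_trans)
qed

lemma maximum_code_subseq_cover:
  assumes C: "C \<subseteq> words q n" "min_dist_ge q C d" "card C = A_q q n d"
    and d: "0 < d" "d \<le> 2 * (real t + 1)"
  shows "words q n \<subseteq> (\<Union>c\<in>C. \<Union>z\<in>{z. length z = n - t \<and> subseq z c}. supseqs q n z)"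
proof
  fix w assume w: "w \<in> words q n"
  with maximum_code_covers[OF C d(1)] obtain c where c: "c \<in> C" "real (insdel_dist q c w) < d"
    by blast
  have "c \<in> words q n" using C(1) c(1) by blast
  moreover have "real (insdel_dist q c w) < 2 * (real t + 1)" using c(2) d(2) by linarith
  ultimately obtain z where "length z = n - t" "subseq z c" "subseq z w"
    using w by (metis close_words_common_subseq)
  with c w show "w \<in> (\<Union>c\<in>C. \<Union>z\<in>{z. length z = n - t \<and> subseq z c}. supseqs q n z)"
    by (auto simp: supseqs_def)
qed

lemma gilbert_varshamov_insdel:
  assumes "q \<ge> 2" and "t \<le> n" and "0 < d" and "d \<le> 2 * (real t + 1)"
  shows "q ^ n \<le> A_q q n d * (n choose t) * ((n + t) choose t) * (q - 1) ^ t"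
proof -
  obtain C where C: "C \<subseteq> words q n" "min_dist_ge q C d" "card C = A_q q n d"
    by (rule A_q_attained)
  have "finite C" using C(1) finite_words by (rule finite_subset)
  define Z where "Z c = {z. length z = n - t \<and> subseq z c}" for c :: "nat list"
  have finite_Z: "finite (Z c)" for c
    unfolding Z_def by (rule finite_subset[of _ "set (subseqs c)"]) auto
  note cover = maximum_code_subseq_cover[OF C assms(3,4), folded Z_def]
  let ?B = "((n + t) choose t) * (q - 1) ^ t"
  have "q ^ n \<le> card (\<Union>c\<in>C. \<Union>z\<in>Z c. supseqs q n z)"
    unfolding card_words[symmetric] using cover
    by (intro card_mono) (simp_all add: \<open>finite C\<close> finite_Z finite_supseqs)
  also have "\<dots> \<le> (\<Sum>c\<in>C. \<Sum>z\<in>Z c. card (supseqs q n z))"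
    by (intro order.trans[OF card_UN_le] sum_mono card_UN_le) (simp_all add: \<open>finite C\<close> finite_Z)
  also have "\<dots> \<le> (\<Sum>c\<in>C. \<Sum>z\<in>Z c. ?B)"
  proof (intro sum_mono card_supseqs_le[OF assms(1)])
    fix c z assume "c \<in> C" "z \<in> Z c"
    with C(1) assms(2) show "set z \<subseteq> {0..<q}" "length z + t = n"
      by (auto simp: Z_def words_def dest!: subseq_set_subset)
  qed
  also have "\<dots> \<le> (\<Sum>c\<in>C. (n choose t) * ?B)"
  proof (intro sum_mono)
    fix c assume "c \<in> C"
    with C(1) have "card (Z c) \<le> n choose (n - t)"
      using card_subseqs_length_le[of "n - t" c] by (auto simp: Z_def words_def)
    also have "\<dots> = n choose t" using assms(2) by (rule binomial_symmetric[symmetric])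
    finally show "(\<Sum>z\<in>Z c. ?B) \<le> (n choose t) * ?B" by simp
  qed
  also have "\<dots> = A_q q n d * (n choose t) * ((n + t) choose t) * (q - 1) ^ t"
    using C(3) by simp
  finally show ?thesis .
qed

section \<open>The asymptotic rate\<close>

lemma ln_binomial_le:
  assumes "0 < p" "p < (1::real)" "k \<le> N"
  shows "ln (real (N choose k)) \<le> - real k * ln p - real (N - k) * ln (1 - p)"
proof -
  have "real (N choose k) * p ^ k * (1 - p) ^ (N - k)
      \<le> (\<Sum>j\<le>N. real (N choose j) * p ^ j * (1 - p) ^ (N - j))"
    using assms by (intro member_le_sum) auto
  also have "\<dots> = 1" using binomial_ring[of p "1 - p" N] by simp
  finally have "ln (real (N choose k) * p ^ k * (1 - p) ^ (N - k)) \<le> 0"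
    using assms by (subst ln_le_zero_iff) auto
  then show ?thesis
    using assms by (simp add: ln_mult ln_realpow)
qed

lemma ln_binomials_le:
  fixes \<delta> :: real
  assumes \<delta>: "0 < \<delta>" "\<delta> < 1" and "t \<le> n"
  shows "ln (real (n choose t)) + ln (real ((n + t) choose t))
    \<le> real t * (ln (1 + \<delta>) + ln (1 - \<delta>) - 2 * ln \<delta>) + real n * (ln (1 + \<delta>) - ln (1 - \<delta>))"
proof -
  have "ln (real (n choose t)) \<le> - (real t * ln \<delta>) - real n * ln (1 - \<delta>) + real t * ln (1 - \<delta>)"
    using ln_binomial_le[OF \<delta> \<open>t \<le> n\<close>] \<open>t \<le> n\<close> by (simp add: of_nat_diff algebra_simps)
  moreover have "ln (real ((n + t) choose t)) \<le> real t * ln (1 + \<delta>) - real t * ln \<delta> + real n * ln (1 + \<delta>)"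
  proof -
    have "0 < \<delta> / (1 + \<delta>)" "\<delta> / (1 + \<delta>) < 1" "1 - \<delta> / (1 + \<delta>) = 1 / (1 + \<delta>)"
      using \<delta> by (auto simp: field_simps)
    from ln_binomial_le[OF this(1,2), of t "n + t"] this(3) \<delta> show ?thesis
      by (simp add: ln_div algebra_simps)
  qed
  ultimately show ?thesis by (simp add: algebra_simps)
qed

lemma ln_gilbert_varshamov_insdel:
  assumes q: "q \<ge> 2" and "t \<le> n" and "0 < d" and "d \<le> 2 * (real t + 1)"
  shows "real n * ln q \<le> ln (real (A_q q n d)) + ln (real (n choose t))
    + ln (real ((n + t) choose t)) + real t * ln (real q - 1)"
proof -
  define A where "A = real (A_q q n d)"
  have "real (q ^ n) \<le> real (A_q q n d * (n choose t) * ((n + t) choose t) * (q - 1) ^ t)"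
    unfolding of_nat_le_iff using assms by (rule gilbert_varshamov_insdel)
  then have gv: "real q ^ n \<le> A * real (n choose t) * real ((n + t) choose t) * (real q - 1) ^ t"
    unfolding A_def using q by (simp add: of_nat_diff)
  moreover have qn_pos: "0 < real q ^ n" using q by simp
  ultimately have "A \<noteq> 0" by (metis mult_zero_left not_less)
  then have "0 < A" unfolding A_def by simp
  have "ln (real q ^ n) \<le> ln (A * real (n choose t) * real ((n + t) choose t) * (real q - 1) ^ t)"
    using gv qn_pos less_le_trans[OF qn_pos gv] by (subst ln_le_cancel_iff) auto
  then show ?thesis
    using \<open>0 < A\<close> \<open>t \<le> n\<close> q unfolding A_def by (simp add: ln_mult ln_realpow)
qed

lemma ln_A_q_ge:
  fixes \<delta> :: real
  assumes q: "q \<ge> 2" and \<delta>: "0 < \<delta>" "\<delta> < 1" and n: "n \<ge> 1"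
  defines "la \<equiv> ln (real q - 1) + ln (1 + \<delta>) + ln (1 - \<delta>) - 2 * ln \<delta>"
    and "lb \<equiv> ln (1 + \<delta>) - ln (1 - \<delta>)"
  shows "real n * (ln q - \<delta> * la - lb) - \<bar>la\<bar> \<le> ln (real (A_q q n (2 * \<delta> * real n)))"
proof -
  define t where "t = nat (\<lceil>\<delta> * real n\<rceil> - 1)"
  have "0 < \<delta> * real n" using \<delta> n by simp
  then have "real t = real_of_int \<lceil>\<delta> * real n\<rceil> - 1"
    unfolding t_def by (simp add: of_nat_nat le_ceiling_iff)
  then have t_le: "real t \<le> \<delta> * real n" and t_ge: "\<delta> * real n \<le> real t + 1"
    by linarith+
  have "\<delta> * real n \<le> real n" using \<delta> by (simp add: mult_left_le_one_le)
  with t_le have "t \<le> n" by linarith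
  have "real n * ln q \<le> ln (real (A_q q n (2 * \<delta> * real n))) + ln (real (n choose t))
      + ln (real ((n + t) choose t)) + real t * ln (real q - 1)"
    using t_ge \<open>0 < \<delta> * real n\<close> by (intro ln_gilbert_varshamov_insdel q \<open>t \<le> n\<close>) auto
  moreover note ln_binomials_le[OF \<delta> \<open>t \<le> n\<close>]
  moreover have "real t * la \<le> \<delta> * real n * la + \<bar>la\<bar>"
  proof -
    have "\<bar>real t - \<delta> * real n\<bar> \<le> 1" using t_le t_ge by linarith
    then have "\<bar>(real t - \<delta> * real n) * la\<bar> \<le> \<bar>la\<bar>"
      by (simp add: abs_mult mult_left_le_one_le)
    then show ?thesis by (simp add: algebra_simps abs_le_iff)
  qed
  ultimately show ?thesis
    unfolding la_def lb_def by (simp add: algebra_simps)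
qed

lemma H_q_eq:
  assumes "0 < x" "x < 1"
  shows "H_q q x = (x * ln (real q - 1) - x * ln x - (1 - x) * ln (1 - x)) / ln q"
  using assms by (simp add: H_q_def log_def diff_divide_distrib)

lemma H_q_rate_eq:
  fixes q :: nat and \<delta> :: real
  assumes "0 < \<delta>" "\<delta> < 1"
  defines "la \<equiv> ln (real q - 1) + ln (1 + \<delta>) + ln (1 - \<delta>) - 2 * ln \<delta>"
    and "lb \<equiv> ln (1 + \<delta>) - ln (1 - \<delta>)"
  shows "1 - (1 + \<delta>) * H_q q (\<delta> / (1 + \<delta>)) + \<delta> * log q (real q - 1) - H_q q \<delta>
    = 1 - (\<delta> * la + lb) / ln q"
proof -
  define p where "p = \<delta> / (1 + \<delta>)"
  have p: "0 < p" "p < 1" and p_mult: "(1 + \<delta>) * p = \<delta>" "(1 + \<delta>) * (1 - p) = 1"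
    using assms(1) by (auto simp: p_def field_simps)
  have "ln (1 + \<delta>) + ln (1 - p) = ln ((1 + \<delta>) * (1 - p))"
    using assms(1) p by (simp add: ln_mult)
  then have ln_p: "ln p = ln \<delta> - ln (1 + \<delta>)" "ln (1 - p) = - ln (1 + \<delta>)"
    using assms(1) unfolding p_mult(2) by (simp_all add: p_def ln_div)
  have "(1 + \<delta>) * H_q q p = (((1 + \<delta>) * p) * ln (real q - 1) - ((1 + \<delta>) * p) * ln p
      - ((1 + \<delta>) * (1 - p)) * ln (1 - p)) / ln q"
    using p by (simp add: H_q_eq algebra_simps add_divide_distrib diff_divide_distrib)
  also have "\<dots> = (\<delta> * ln (real q - 1) - \<delta> * ln \<delta> + (1 + \<delta>) * ln (1 + \<delta>)) / ln q"
    unfolding p_mult ln_p by (simp add: algebra_simps)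
  finally have Hp: "(1 + \<delta>) * H_q q (\<delta> / (1 + \<delta>))
      = (\<delta> * ln (real q - 1) - \<delta> * ln \<delta> + (1 + \<delta>) * ln (1 + \<delta>)) / ln q"
    unfolding p_def .
  \<comment> \<open>No assumption on q is needed: if ln q = 0, division by zero makes both sides 1.\<close>
  show ?thesis
    unfolding Hp H_q_eq[OF assms(1,2)] log_def la_def lb_def
    by (cases "ln q = 0") (simp_all add: field_simps)
qed

lemma ereal_le_liminf_of_error_over_n:
  fixes f :: "nat \<Rightarrow> real"
  assumes bound: "\<And>n. n \<ge> 1 \<Longrightarrow> R - c / real n \<le> f n"
  shows "ereal R \<le> liminf (\<lambda>n. ereal (f n))"
proof -
  have "(\<lambda>n. R - c / real n) \<longlonglongrightarrow> R - 0"
    by (intro tendsto_diff tendsto_const lim_const_over_n)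
  then have "ereal R = liminf (\<lambda>n. ereal (R - c / real n))"
    by (intro lim_imp_Liminf[symmetric]) (simp_all add: lim_ereal)
  also have "\<dots> \<le> liminf (\<lambda>n. ereal (f n))"
  proof (rule Liminf_mono)
    show "\<forall>\<^sub>F n in sequentially. ereal (R - c / real n) \<le> ereal (f n)"
      using eventually_ge_at_top[of "1::nat"] by eventually_elim (simp add: bound)
  qed
  finally show ?thesis .
qed

lemma log_A_q_over_n_ge:
  fixes q :: nat and \<delta> :: real
  assumes q: "q \<ge> 2" and \<delta>: "0 < \<delta>" "\<delta> < 1"
  obtains c where "\<And>n. n \<ge> 1 \<Longrightarrow>
    1 - (1 + \<delta>) * H_q q (\<delta> / (1 + \<delta>)) + \<delta> * log q (real q - 1) - H_q q \<delta> - c / real n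
      \<le> log q (real (A_q q n (2 * \<delta> * real n))) / real n"
proof -
  define la where "la = ln (real q - 1) + ln (1 + \<delta>) + ln (1 - \<delta>) - 2 * ln \<delta>"
  define lb where "lb = ln (1 + \<delta>) - ln (1 - \<delta>)"
  have "1 - (1 + \<delta>) * H_q q (\<delta> / (1 + \<delta>)) + \<delta> * log q (real q - 1) - H_q q \<delta>
      - \<bar>la\<bar> / ln q / real n \<le> log q (real (A_q q n (2 * \<delta> * real n))) / real n"
    if "n \<ge> 1" for n
  proof -
    have "0 < ln q" "0 < real n" using q that by auto
    have "1 - (1 + \<delta>) * H_q q (\<delta> / (1 + \<delta>)) + \<delta> * log q (real q - 1) - H_q q \<delta>
        - \<bar>la\<bar> / ln q / real n
        = (real n * (ln q - \<delta> * la - lb) - \<bar>la\<bar>) / (ln q * real n)"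
      unfolding H_q_rate_eq[OF \<delta>] la_def lb_def using \<open>0 < ln q\<close> \<open>0 < real n\<close>
      by (simp add: field_simps)
    also have "\<dots> \<le> ln (real (A_q q n (2 * \<delta> * real n))) / (ln q * real n)"
      using ln_A_q_ge[OF q \<delta> that] \<open>0 < ln q\<close> \<open>0 < real n\<close>
      unfolding la_def lb_def by (intro divide_right_mono) auto
    also have "\<dots> = log q (real (A_q q n (2 * \<delta> * real n))) / real n"
      by (simp add: log_def)
    finally show ?thesis .
  qed
  then show thesis by (rule that)
qed

theorem mainTheorem17:
  fixes q :: nat and \<delta> :: real
  assumes "q \<ge> 2" and "0 < \<delta>" and "\<delta> \<le> (real q - 1) / real q"
  shows "liminf (\<lambda>n. ereal (log q (real (A_q q n (2 * \<delta> * real n))) / real n))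
     \<ge> ereal (1 - (1 + \<delta>) * H_q q (\<delta> / (1 + \<delta>)) + \<delta> * log q (real q - 1) - H_q q \<delta>)"
proof -
  have "(real q - 1) / real q < 1" using assms(1) by simp
  with assms(3) have "\<delta> < 1" by linarith
  then obtain c where "\<And>n. n \<ge> 1 \<Longrightarrow>
      1 - (1 + \<delta>) * H_q q (\<delta> / (1 + \<delta>)) + \<delta> * log q (real q - 1) - H_q q \<delta> - c / real n
        \<le> log q (real (A_q q n (2 * \<delta> * real n))) / real n"
    using log_A_q_over_n_ge[OF assms(1,2)] by blast
  then show ?thesis by (rule ereal_le_liminf_of_error_over_n)
qed

end
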